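(* Let $M$ be a graded $R$-module. The set $\beta=\{GX_r^{qp.M}\mid r\in h(R)\}$ forms a base for the quasi-Zariski topology on $qp.Spec_g(M)$.
   Context: $R=\bigoplus_{g\in G}R_g$ is a graded commutative ring with identity graded by a group $G$, $h(R)=\bigcup_g R_g$; $M$ is a graded $R$-module, $h(M)$ its homogeneous elements. $Gr(I)$ is the graded radical of a graded ideal $I$. $(K:_RM)=\{r: rM\subseteq K\}$. Graded prime submodule: proper graded $P$ with $rm\in P$ ($r\in h(R), m\in h(M)$) implying $m\in P$ or $r\in(P:_RM)$. $Gr_M(K)$: intersection of graded prime submodules containing $K$ ($M$ if none). Graded primeful property of $K$: for each graded prime $p\supseteq(K:_RM)$ there is a graded prime submodule $P\supseteq K$ with $(P:_RM)=p$. Graded quasi-primary submodule: proper graded $Q$ with $rm\in Q$ ($r\in h(R),m\in h(M)$) implying $r\in Gr((Q:_RM))$ or $m\in Gr_M(Q)$. $qp.Spec_g(M)$: graded quasi-primary submodules with the graded primeful property. $qp\text{-}V_M^g(K)=\{Q\in qp.Spec_g(M): Gr((Q:_RM))\supseteq Gr((K:_RM))\}$; the quasi-Zariski topology has closed sets exactly these. For $r\in h(R)$, $GX_r^{qp.M}=qp.Spec_g(M)\setminus qp\text{-}V_M^g(rM)$. *)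

theory Defs
  imports Main "HOL.Modules"
begin

text \<open>The ring R is the whole carrier of a type 'r::comm_ring_1, graded by a
group G (type 'g::group_add, operation written +) via RG g = R_g. The module M is the whole
carrier of a type 'm::ab_group_add with scalar multiplication scale, graded via MG g = M_g.\<close>

definition fin_decomp :: "('g \<Rightarrow> 'a::comm_monoid_add set) \<Rightarrow> 'a \<Rightarrow> ('g \<Rightarrow> 'a) \<Rightarrow> bool" where
  "fin_decomp AG x c \<longleftrightarrow> finite {g. c g \<noteq> 0} \<and> (\<forall>g. c g \<in> AG g) \<and> x = sum c {g. c g \<noteq> 0}"

definition additive_subgroup :: "'a::ab_group_add set \<Rightarrow> bool" where
  "additive_subgroup A \<longleftrightarrow> 0 \<in> A \<and> (\<forall>a\<in>A. \<forall>b\<in>A. a + b \<in> A \<and> - a \<in> A)"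

definition graded_ring :: "('g::group_add \<Rightarrow> 'r::comm_ring_1 set) \<Rightarrow> bool" where
  "graded_ring RG \<longleftrightarrow> (\<forall>g. additive_subgroup (RG g))
     \<and> (\<forall>g h. \<forall>a\<in>RG g. \<forall>b\<in>RG h. a * b \<in> RG (g + h))
     \<and> (\<forall>x. \<exists>!c. fin_decomp RG x c)"

definition graded_module :: "('g::group_add \<Rightarrow> 'r::comm_ring_1 set) \<Rightarrow> ('r \<Rightarrow> 'm::ab_group_add \<Rightarrow> 'm) \<Rightarrow> ('g \<Rightarrow> 'm set) \<Rightarrow> bool" where
  "graded_module RG scale MG \<longleftrightarrow> module scale \<and> (\<forall>g. additive_subgroup (MG g))
     \<and> (\<forall>g h. \<forall>a\<in>RG g. \<forall>m\<in>MG h. scale a m \<in> MG (g + h))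
     \<and> (\<forall>x. \<exists>!c. fin_decomp MG x c)"

definition homog :: "('g \<Rightarrow> 'a set) \<Rightarrow> 'a set" where
  "homog AG = (\<Union>g. AG g)"

definition is_ideal :: "'r::comm_ring_1 set \<Rightarrow> bool" where
  "is_ideal I \<longleftrightarrow> 0 \<in> I \<and> (\<forall>a\<in>I. \<forall>b\<in>I. a + b \<in> I) \<and> (\<forall>r. \<forall>a\<in>I. r * a \<in> I)"

definition graded_ideal :: "('g \<Rightarrow> 'r::comm_ring_1 set) \<Rightarrow> 'r set \<Rightarrow> bool" where
  "graded_ideal RG I \<longleftrightarrow> is_ideal I \<and> (\<forall>x\<in>I. \<forall>c. fin_decomp RG x c \<longrightarrow> (\<forall>g. c g \<in> I))"

definition graded_prime_ideal :: "('g \<Rightarrow> 'r::comm_ring_1 set) \<Rightarrow> 'r set \<Rightarrow> bool" where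
  "graded_prime_ideal RG p \<longleftrightarrow> graded_ideal RG p \<and> p \<noteq> UNIV
     \<and> (\<forall>a\<in>homog RG. \<forall>b\<in>homog RG. a * b \<in> p \<longrightarrow> a \<in> p \<or> b \<in> p)"

definition graded_radical :: "('g \<Rightarrow> 'r::comm_ring_1 set) \<Rightarrow> 'r set \<Rightarrow> 'r set" where
  "graded_radical RG I = {x. \<forall>c. fin_decomp RG x c \<longrightarrow> (\<forall>g. \<exists>n. c g ^ n \<in> I)}"

definition is_submodule :: "('r::comm_ring_1 \<Rightarrow> 'm::ab_group_add \<Rightarrow> 'm) \<Rightarrow> 'm set \<Rightarrow> bool" where
  "is_submodule scale N \<longleftrightarrow> 0 \<in> N \<and> (\<forall>a\<in>N. \<forall>b\<in>N. a + b \<in> N) \<and> (\<forall>r. \<forall>a\<in>N. scale r a \<in> N)"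

definition graded_submodule :: "('r::comm_ring_1 \<Rightarrow> 'm::ab_group_add \<Rightarrow> 'm) \<Rightarrow> ('g \<Rightarrow> 'm set) \<Rightarrow> 'm set \<Rightarrow> bool" where
  "graded_submodule scale MG N \<longleftrightarrow> is_submodule scale N
     \<and> (\<forall>x\<in>N. \<forall>c. fin_decomp MG x c \<longrightarrow> (\<forall>g. c g \<in> N))"

definition colon :: "('r \<Rightarrow> 'm \<Rightarrow> 'm) \<Rightarrow> 'm set \<Rightarrow> 'r set" where
  "colon scale K = {r. \<forall>m. scale r m \<in> K}"

definition graded_prime_submodule ::
  "('g \<Rightarrow> 'r::comm_ring_1 set) \<Rightarrow> ('r \<Rightarrow> 'm::ab_group_add \<Rightarrow> 'm) \<Rightarrow> ('g \<Rightarrow> 'm set) \<Rightarrow> 'm set \<Rightarrow> bool" where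
  "graded_prime_submodule RG scale MG P \<longleftrightarrow> graded_submodule scale MG P \<and> P \<noteq> UNIV
     \<and> (\<forall>r\<in>homog RG. \<forall>m\<in>homog MG. scale r m \<in> P \<longrightarrow> m \<in> P \<or> r \<in> colon scale P)"

definition graded_radical_mod ::
  "('g \<Rightarrow> 'r::comm_ring_1 set) \<Rightarrow> ('r \<Rightarrow> 'm::ab_group_add \<Rightarrow> 'm) \<Rightarrow> ('g \<Rightarrow> 'm set) \<Rightarrow> 'm set \<Rightarrow> 'm set" where
  "graded_radical_mod RG scale MG K =
     (if \<exists>P. graded_prime_submodule RG scale MG P \<and> K \<subseteq> P
      then \<Inter>{P. graded_prime_submodule RG scale MG P \<and> K \<subseteq> P} else UNIV)"

definition graded_primeful ::
  "('g \<Rightarrow> 'r::comm_ring_1 set) \<Rightarrow> ('r \<Rightarrow> 'm::ab_group_add \<Rightarrow> 'm) \<Rightarrow> ('g \<Rightarrow> 'm set) \<Rightarrow> 'm set \<Rightarrow> bool" where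
  "graded_primeful RG scale MG K \<longleftrightarrow>
     (\<forall>p. graded_prime_ideal RG p \<and> colon scale K \<subseteq> p \<longrightarrow>
        (\<exists>P. graded_prime_submodule RG scale MG P \<and> K \<subseteq> P \<and> colon scale P = p))"

definition graded_quasi_primary ::
  "('g \<Rightarrow> 'r::comm_ring_1 set) \<Rightarrow> ('r \<Rightarrow> 'm::ab_group_add \<Rightarrow> 'm) \<Rightarrow> ('g \<Rightarrow> 'm set) \<Rightarrow> 'm set \<Rightarrow> bool" where
  "graded_quasi_primary RG scale MG Q \<longleftrightarrow> graded_submodule scale MG Q \<and> Q \<noteq> UNIV
     \<and> (\<forall>r\<in>homog RG. \<forall>m\<in>homog MG. scale r m \<in> Q \<longrightarrow>
          r \<in> graded_radical RG (colon scale Q) \<or> m \<in> graded_radical_mod RG scale MG Q)"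

definition qp_spec ::
  "('g \<Rightarrow> 'r::comm_ring_1 set) \<Rightarrow> ('r \<Rightarrow> 'm::ab_group_add \<Rightarrow> 'm) \<Rightarrow> ('g \<Rightarrow> 'm set) \<Rightarrow> 'm set set" where
  "qp_spec RG scale MG = {Q. graded_quasi_primary RG scale MG Q \<and> graded_primeful RG scale MG Q}"

definition qp_V ::
  "('g \<Rightarrow> 'r::comm_ring_1 set) \<Rightarrow> ('r \<Rightarrow> 'm::ab_group_add \<Rightarrow> 'm) \<Rightarrow> ('g \<Rightarrow> 'm set) \<Rightarrow> 'm set \<Rightarrow> 'm set set" where
  "qp_V RG scale MG K = {Q \<in> qp_spec RG scale MG.
      graded_radical RG (colon scale K) \<subseteq> graded_radical RG (colon scale Q)}"

definition qz_open ::
  "('g \<Rightarrow> 'r::comm_ring_1 set) \<Rightarrow> ('r \<Rightarrow> 'm::ab_group_add \<Rightarrow> 'm) \<Rightarrow> ('g \<Rightarrow> 'm set) \<Rightarrow> 'm set set set" where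
  "qz_open RG scale MG = {qp_spec RG scale MG - qp_V RG scale MG K | K. graded_submodule scale MG K}"

definition GX ::
  "('g \<Rightarrow> 'r::comm_ring_1 set) \<Rightarrow> ('r \<Rightarrow> 'm::ab_group_add \<Rightarrow> 'm) \<Rightarrow> ('g \<Rightarrow> 'm set) \<Rightarrow> 'r \<Rightarrow> 'm set set" where
  "GX RG scale MG r = qp_spec RG scale MG - qp_V RG scale MG (range (scale r))"

definition is_base_for :: "'a set set \<Rightarrow> 'a set set \<Rightarrow> bool" where
  "is_base_for B Opens \<longleftrightarrow> B \<subseteq> Opens \<and> (\<forall>U\<in>Opens. \<exists>B'. B' \<subseteq> B \<and> U = \<Union>B')"

end

theory Submission
  imports Defs
begin

text \<open>A homogeneous r lies in Gr((rM : M)), and an inclusion Gr((K : M)) \<subseteq> Gr(J)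
can be tested on homogeneous elements: the homogeneous components of an element of
Gr((K : M)) have positive powers in (K : M), which are again homogeneous. So it suffices
that every homogeneous r \<in> (K : M) has a power in J. Hence qp-V(K) is the intersection
of the sets qp-V(rM) over the homogeneous r \<in> (K : M), its complement is the union of
the corresponding GX_r, and each GX_r is open because rM is a graded submodule.\<close>

lemma fin_decomp_homog:
  assumes "\<And>g. 0 \<in> AG g" and "x \<in> AG h"
  shows "fin_decomp AG x (\<lambda>g. if g = h then x else 0)"
proof -
  have "{g. (if g = h then x else 0) \<noteq> 0} = (if x = 0 then {} else {h})" by auto
  then show ?thesis unfolding fin_decomp_def using assms by auto
qed

lemma graded_ring_zero_mem: "graded_ring RG \<Longrightarrow> 0 \<in> RG g"
  unfolding graded_ring_def additive_subgroup_def by blast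

lemma graded_ring_fin_decomp_homog:
  assumes "graded_ring RG" and "r \<in> RG h"
  shows "fin_decomp RG r c \<longleftrightarrow> c = (\<lambda>g. if g = h then r else 0)"
proof -
  have "\<exists>!c. fin_decomp RG r c" using assms(1) unfolding graded_ring_def by blast
  with fin_decomp_homog[of RG, OF graded_ring_zero_mem[OF assms(1)] assms(2)] show ?thesis by blast
qed

lemma homog_power:
  assumes "graded_ring RG" and "r \<in> homog RG" and "n > 0"
  shows "r ^ n \<in> homog RG"
proof -
  obtain g where r: "r \<in> RG g" using assms(2) unfolding homog_def by blast
  have "r ^ Suc k \<in> homog RG" for k
  proof (induction k)
    case 0
    then show ?case using assms(2) by simp
  next
    case (Suc k)
    then obtain d where "r ^ Suc k \<in> RG d" unfolding homog_def by blast
    then have "r * r ^ Suc k \<in> RG (g + d)" using assms(1) r unfolding graded_ring_def by blast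
    then show ?case unfolding homog_def by auto
  qed
  then show ?thesis using \<open>n > 0\<close> gr0_conv_Suc by auto
qed

lemma graded_radical_mono: "I \<subseteq> J \<Longrightarrow> graded_radical RG I \<subseteq> graded_radical RG J"
  unfolding graded_radical_def by blast

lemma homog_power_mem_if_in_graded_radical:
  assumes "graded_ring RG" and "r \<in> RG h" and "r \<in> graded_radical RG I"
  shows "\<exists>n. r ^ n \<in> I"
proof -
  have "\<exists>n. (if h = h then r else 0) ^ n \<in> I"
    using assms(3) fin_decomp_homog[of RG, OF graded_ring_zero_mem[OF assms(1)] assms(2)]
    unfolding graded_radical_def by blast
  then show ?thesis by simp
qed

lemma homog_in_graded_radical:
  assumes "graded_ring RG" and "r \<in> RG h" and "0 \<in> I" and "r ^ n \<in> I"
  shows "r \<in> graded_radical RG I"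
proof -
  have "\<exists>n. (if g = h then r else 0) ^ n \<in> I" for g
  proof (cases "g = h")
    case True
    then show ?thesis using assms(4) by auto
  next
    case False
    then have "(if g = h then r else 0) ^ 1 \<in> I" using assms(3) by simp
    then show ?thesis ..
  qed
  then show ?thesis by (simp add: graded_radical_def graded_ring_fin_decomp_homog[OF assms(1,2)])
qed

lemma graded_radical_subset_if_homog_powers:
  assumes "graded_ring RG"
    and ideal: "\<And>a b. a \<in> I \<Longrightarrow> b * a \<in> I"
    and powers: "\<And>r. r \<in> homog RG \<Longrightarrow> r \<in> I \<Longrightarrow> \<exists>n. r ^ n \<in> J"
  shows "graded_radical RG I \<subseteq> graded_radical RG J"
proof
  fix x assume x: "x \<in> graded_radical RG I"
  show "x \<in> graded_radical RG J" unfolding graded_radical_def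
  proof (intro CollectI allI impI)
    fix c g assume c: "fin_decomp RG x c"
    then obtain n where "c g ^ n \<in> I" using x unfolding graded_radical_def by auto
    then have in_I: "c g ^ Suc n \<in> I" using ideal[of "c g ^ n" "c g"] by simp
    have "c g \<in> RG g" using c unfolding fin_decomp_def by simp
    then have "c g \<in> homog RG" unfolding homog_def by blast
    then have "c g ^ Suc n \<in> homog RG" by (rule homog_power[OF assms(1)]) simp
    then obtain j where "(c g ^ Suc n) ^ j \<in> J" using powers in_I by blast
    then have "c g ^ (Suc n * j) \<in> J" by (simp only: power_mult)
    then show "\<exists>n. c g ^ n \<in> J" ..
  qed
qed

lemma colon_mult_mem:
  assumes "module scale" and "a \<in> colon scale K"
  shows "b * a \<in> colon scale K"
proof -
  have "scale (b * a) m = scale a (scale b m)" for m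
    by (simp add: module.scale_scale[OF assms(1)] mult.commute)
  then show ?thesis using assms(2) unfolding colon_def by simp
qed

lemma colon_range_scale_subset: "r \<in> colon scale K \<Longrightarrow> colon scale (range (scale r)) \<subseteq> colon scale K"
  unfolding colon_def by (auto simp: image_iff) metis

lemma zero_mem_colon_range_scale:
  assumes "module scale"
  shows "0 \<in> colon scale (range (scale r))"
proof -
  have "scale 0 m = scale r 0" for m
    by (simp add: module.scale_zero_left[OF assms] module.scale_zero_right[OF assms])
  then show ?thesis unfolding colon_def by auto
qed

lemma mem_colon_range_scale: "r \<in> colon scale (range (scale r))"
  unfolding colon_def by blast

lemma graded_radical_colon_subset_iff:
  assumes "graded_ring RG" and "module scale"
  shows "graded_radical RG (colon scale K) \<subseteq> graded_radical RG J \<longleftrightarrow>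
    (\<forall>r \<in> homog RG \<inter> colon scale K.
       graded_radical RG (colon scale (range (scale r))) \<subseteq> graded_radical RG J)"
    (is "?lhs \<longleftrightarrow> ?rhs")
proof
  assume ?lhs
  then show ?rhs using graded_radical_mono[OF colon_range_scale_subset] by blast
next
  assume rhs: ?rhs
  have "\<exists>n. r ^ n \<in> J" if "r \<in> homog RG" "r \<in> colon scale K" for r
  proof -
    obtain h where r: "r \<in> RG h" using \<open>r \<in> homog RG\<close> unfolding homog_def by blast
    have "r \<in> graded_radical RG (colon scale (range (scale r)))"
      using homog_in_graded_radical[OF assms(1) r zero_mem_colon_range_scale[OF assms(2)],
          of 1 r]
      by (simp add: mem_colon_range_scale)
    then have "r \<in> graded_radical RG J" using rhs that by blast
    then show ?thesis using homog_power_mem_if_in_graded_radical[OF assms(1) r] by blast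
  qed
  then show ?lhs
    using graded_radical_subset_if_homog_powers[OF assms(1) colon_mult_mem[OF assms(2)]] by blast
qed

lemma is_submodule_range_scale:
  assumes "module scale"
  shows "is_submodule scale (range (scale r))"
  unfolding is_submodule_def
proof (intro conjI ballI allI)
  show "0 \<in> range (scale r)"
    using module.scale_zero_right[OF assms, of r] by (metis rangeI)
next
  fix a b assume "a \<in> range (scale r)" "b \<in> range (scale r)"
  then obtain x y where "a = scale r x" "b = scale r y" by blast
  then have "a + b = scale r (x + y)" by (simp add: module.scale_right_distrib[OF assms])
  then show "a + b \<in> range (scale r)" by simp
next
  fix s a assume "a \<in> range (scale r)"
  then obtain x where "a = scale r x" by blast
  then have "scale s a = scale r (scale s x)" by (simp add: module.scale_left_commute[OF assms])
  then show "scale s a \<in> range (scale r)" by simp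
qed

lemma fin_decomp_scale_homog:
  assumes GM: "graded_module RG scale MG" and r: "r \<in> RG h" and d: "fin_decomp MG m d"
  shows "fin_decomp MG (scale r m) (\<lambda>g. scale r (d (- h + g)))" (is "fin_decomp MG _ ?c")
proof -
  have md: "module scale" using GM unfolding graded_module_def by blast
  define S where "S = {k. d k \<noteq> 0}"
  have fin: "finite S" and dk: "\<And>k. d k \<in> MG k" and m: "m = sum d S"
    using d unfolding fin_decomp_def S_def by auto
  have shift: "h + (- h + g) = g" for g by (simp add: add.assoc[symmetric])
  have supp: "{g. ?c g \<noteq> 0} \<subseteq> (\<lambda>k. h + k) ` S"
  proof
    fix g assume "g \<in> {g. ?c g \<noteq> 0}"
    then have "- h + g \<in> S" unfolding S_def using module.scale_zero_right[OF md] by auto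
    then show "g \<in> (\<lambda>k. h + k) ` S" using shift by (metis image_eqI)
  qed
  have "sum ?c {g. ?c g \<noteq> 0} = sum ?c ((\<lambda>k. h + k) ` S)"
    using fin supp by (intro sum.mono_neutral_left) auto
  also have "\<dots> = (\<Sum>k\<in>S. scale r (d k))"
    by (subst sum.reindex) (auto simp: inj_on_def add.assoc[symmetric])
  also have "\<dots> = scale r m" using m module.scale_sum_right[OF md] by metis
  finally have "scale r m = sum ?c {g. ?c g \<noteq> 0}" ..
  moreover have "?c g \<in> MG g" for g
    using GM r dk shift unfolding graded_module_def by metis
  moreover have "finite {g. ?c g \<noteq> 0}" using fin supp finite_subset by blast
  ultimately show ?thesis unfolding fin_decomp_def by blast
qed

lemma graded_submodule_range_scale:
  assumes GM: "graded_module RG scale MG" and "r \<in> homog RG"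
  shows "graded_submodule scale MG (range (scale r))"
proof -
  obtain h where r: "r \<in> RG h" using assms(2) unfolding homog_def by blast
  have md: "module scale" and unique: "\<And>x. \<exists>!c. fin_decomp MG x c"
    using GM unfolding graded_module_def by blast+
  have "c g \<in> range (scale r)" if "fin_decomp MG (scale r m) c" for m c g
  proof -
    obtain d where "fin_decomp MG m d" using unique by blast
    then have "c = (\<lambda>g. scale r (d (- h + g)))"
      using fin_decomp_scale_homog[OF GM r] unique that by blast
    then show ?thesis by simp
  qed
  then show ?thesis
    unfolding graded_submodule_def using is_submodule_range_scale[OF md] by blast
qed

lemma qp_V_eq_Inter_qp_V_range_scale:
  assumes "graded_ring RG" and "module scale"
  shows "qp_V RG scale MG K = qp_spec RG scale MG \<inter>
    (\<Inter>r \<in> homog RG \<inter> colon scale K. qp_V RG scale MG (range (scale r)))"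
proof (rule set_eqI)
  fix Q
  show "Q \<in> qp_V RG scale MG K \<longleftrightarrow> Q \<in> qp_spec RG scale MG \<inter>
    (\<Inter>r \<in> homog RG \<inter> colon scale K. qp_V RG scale MG (range (scale r)))"
    using graded_radical_colon_subset_iff[OF assms, of K "colon scale Q"]
    unfolding qp_V_def by auto
qed

lemma qp_spec_diff_qp_V_eq_Union_GX:
  assumes "graded_ring RG" and "module scale"
  shows "qp_spec RG scale MG - qp_V RG scale MG K =
    (\<Union>r \<in> homog RG \<inter> colon scale K. GX RG scale MG r)"
  unfolding qp_V_eq_Inter_qp_V_range_scale[OF assms, of MG K] GX_def by blast

lemma GX_in_qz_open:
  assumes "graded_module RG scale MG" and "r \<in> homog RG"
  shows "GX RG scale MG r \<in> qz_open RG scale MG"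
  unfolding GX_def qz_open_def using graded_submodule_range_scale[OF assms] by auto

theorem theorem3p14:
  fixes RG :: "'g::group_add \<Rightarrow> 'r::comm_ring_1 set"
    and scale :: "'r \<Rightarrow> 'm::ab_group_add \<Rightarrow> 'm"
    and MG :: "'g \<Rightarrow> 'm set"
  assumes "graded_ring RG"
    and "graded_module RG scale MG"
  shows "is_base_for {GX RG scale MG r | r. r \<in> homog RG} (qz_open RG scale MG)"
proof -
  have md: "module scale" using assms(2) unfolding graded_module_def by simp
  have "\<exists>B'. B' \<subseteq> {GX RG scale MG r | r. r \<in> homog RG} \<and> U = \<Union>B'"
    if U: "U \<in> qz_open RG scale MG" for U
  proof -
    obtain K where "U = qp_spec RG scale MG - qp_V RG scale MG K"
      using U unfolding qz_open_def by blast
    then have "U = \<Union>(GX RG scale MG ` (homog RG \<inter> colon scale K))"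
      using qp_spec_diff_qp_V_eq_Union_GX[OF assms(1) md] by simp
    moreover have "GX RG scale MG ` (homog RG \<inter> colon scale K)
        \<subseteq> {GX RG scale MG r | r. r \<in> homog RG}" by blast
    ultimately show ?thesis by blast
  qed
  moreover have "{GX RG scale MG r | r. r \<in> homog RG} \<subseteq> qz_open RG scale MG"
    using GX_in_qz_open[OF assms(2)] by blast
  ultimately show ?thesis unfolding is_base_for_def by blast
qed

end
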